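(* If $f:D^n\to\mathbb R$ is $\alpha$-bisubmodular, then its Lovász extension coincides with its convex closure: $f^L(\mathbf x)=f^-(\mathbf x)$ for all $\mathbf x\in[-\alpha,1]^n$, where $f^-(\mathbf x)=\min\{\sum_{\mathbf a\in D^n}\lambda(\mathbf a)f(\mathbf a):\lambda\in\mathcal P(\mathbf x)\}$.
   Context: Fix $\alpha\in(0,1]$ and $D=\{-\alpha,0,1\}\subset\mathbb R$. Define the partial order $\preceq$ on $D$ by $0\preceq 1$, $0\preceq -\alpha$ (plus reflexivity), with $1$ and $-\alpha$ incomparable; extend it componentwise to $D^n$. Define $\wedge_0$ on $D$ by $1\wedge_0(-\alpha)=(-\alpha)\wedge_0 1=0$ and $x\wedge_0 y=\min(x,y)$ w.r.t. $\preceq$ if $\{x,y\}\ne\{-\alpha,1\}$; for $a\in D$ define $\vee_a$ by $1\vee_a(-\alpha)=(-\alpha)\vee_a 1=a$ and $x\vee_a y=\max(x,y)$ w.r.t. $\preceq$ if $\{x,y\}\ne\{-\alpha,1\}$; extend componentwise to $D^n$. $f:D^n\to\mathbb R$ is $\alpha$-bisubmodular if for all $\mathbf a,\mathbf b\in D^n$: $f(\mathbf a\wedge_0\mathbf b)+\alpha f(\mathbf a\vee_0\mathbf b)+(1-\alpha)f(\mathbf a\vee_1\mathbf b)\le f(\mathbf a)+f(\mathbf b)$. For $\mathbf x\in[-\alpha,1]^n$, $\mathcal P(\mathbf x)$ is the set of $\lambda:D^n\to[0,1]$ with $\sum_{\mathbf a}\lambda(\mathbf a)=1$ and $\sum_{\mathbf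 a}\lambda(\mathbf a)\mathbf a=\mathbf x$. For each $\mathbf x$ there is a unique $\lambda_{\mathbf x}\in\mathcal P(\mathbf x)$ whose support is a chain w.r.t. $\preceq$; the Lovász extension is $f^L(\mathbf x)=\sum_{\mathbf a\in D^n}\lambda_{\mathbf x}(\mathbf a)f(\mathbf a)$. *)

theory Defs
  imports Complex_Main
begin

definition Dset :: "real \<Rightarrow> real set" where
  "Dset \<alpha> = {-\<alpha>, 0, 1}"

definition DD :: "real \<Rightarrow> ('n::finite \<Rightarrow> real) set" where
  "DD \<alpha> = {a. \<forall>i. a i \<in> Dset \<alpha>}"

definition leqD :: "real \<Rightarrow> real \<Rightarrow> real \<Rightarrow> bool" where
  "leqD \<alpha> x y \<longleftrightarrow> x = y \<or> (x = 0 \<and> (y = 1 \<or> y = -\<alpha>))"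

definition leqV :: "real \<Rightarrow> ('n::finite \<Rightarrow> real) \<Rightarrow> ('n \<Rightarrow> real) \<Rightarrow> bool" where
  "leqV \<alpha> a b \<longleftrightarrow> (\<forall>i. leqD \<alpha> (a i) (b i))"

definition meet0 :: "real \<Rightarrow> real \<Rightarrow> real \<Rightarrow> real" where
  "meet0 \<alpha> x y = (if {x, y} = {-\<alpha>, 1} then 0
                   else if leqD \<alpha> x y then x else y)"

definition joinD :: "real \<Rightarrow> real \<Rightarrow> real \<Rightarrow> real \<Rightarrow> real" where
  "joinD \<alpha> c x y = (if {x, y} = {-\<alpha>, 1} then c
                     else if leqD \<alpha> x y then y else x)"

definition bisubmodular :: "real \<Rightarrow> (('n::finite \<Rightarrow> real) \<Rightarrow> real) \<Rightarrow> bool" where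
  "bisubmodular \<alpha> f \<longleftrightarrow>
     (\<forall>a\<in>DD \<alpha>. \<forall>b\<in>DD \<alpha>.
        f (\<lambda>i. meet0 \<alpha> (a i) (b i)) + \<alpha> * f (\<lambda>i. joinD \<alpha> 0 (a i) (b i))
          + (1 - \<alpha>) * f (\<lambda>i. joinD \<alpha> 1 (a i) (b i)) \<le> f a + f b)"

definition Pdist :: "real \<Rightarrow> ('n::finite \<Rightarrow> real) \<Rightarrow> (('n \<Rightarrow> real) \<Rightarrow> real) set" where
  "Pdist \<alpha> x = {p. (\<forall>a. 0 \<le> p a \<and> p a \<le> 1) \<and> (\<forall>a. a \<notin> DD \<alpha> \<longrightarrow> p a = 0)
                 \<and> (\<Sum>a\<in>DD \<alpha>. p a) = 1
                 \<and> (\<forall>i. (\<Sum>a\<in>DD \<alpha>. p a * a i) = x i)}"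

definition chain_support :: "real \<Rightarrow> (('n::finite \<Rightarrow> real) \<Rightarrow> real) \<Rightarrow> bool" where
  "chain_support \<alpha> p \<longleftrightarrow>
     (\<forall>a\<in>DD \<alpha>. \<forall>b\<in>DD \<alpha>. p a \<noteq> 0 \<longrightarrow> p b \<noteq> 0 \<longrightarrow> leqV \<alpha> a b \<or> leqV \<alpha> b a)"

text \<open>The unique distribution in P(x) with chain support.\<close>
definition lambda_chain :: "real \<Rightarrow> ('n::finite \<Rightarrow> real) \<Rightarrow> (('n \<Rightarrow> real) \<Rightarrow> real)" where
  "lambda_chain \<alpha> x = (THE p. p \<in> Pdist \<alpha> x \<and> chain_support \<alpha> p)"

definition lovasz_ext :: "real \<Rightarrow> (('n::finite \<Rightarrow> real) \<Rightarrow> real) \<Rightarrow> ('n \<Rightarrow> real) \<Rightarrow> real" where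
  "lovasz_ext \<alpha> f x = (\<Sum>a\<in>DD \<alpha>. lambda_chain \<alpha> x a * f a)"

definition convex_closure :: "real \<Rightarrow> (('n::finite \<Rightarrow> real) \<Rightarrow> real) \<Rightarrow> ('n \<Rightarrow> real) \<Rightarrow> real" where
  "convex_closure \<alpha> f x = Inf {(\<Sum>a\<in>DD \<alpha>. p a * f a) | p. p \<in> Pdist \<alpha> x}"

end

theory Submission
  imports Defs "HOL-Library.FuncSet"
begin

text \<open>Sort the coordinates by their level \<open>|x i|\<close>, normalised by \<open>1\<close> or \<open>\<alpha>\<close> according to the
sign of \<open>x i\<close>. The prefixes of this order form a maximal chain \<open>0 = c\<^sub>0 \<prec> \<dots> \<prec> c\<^sub>n = s\<close> of
vectors below the sign vector \<open>s\<close> of \<open>x\<close>, and \<open>\<lambda>\<^sub>x\<close> gives \<open>c\<^sub>k\<close> the weight \<open>t\<^sub>k - t\<^sub>k\<^sub>+\<^sub>1\<close>,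
where \<open>t\<^sub>k\<close> is the \<open>k\<close>-th largest level. Subtracting from \<open>f\<close> the affine function \<open>h\<close> that
interpolates \<open>f\<close> on this chain leaves an \<open>\<alpha>\<close>-bisubmodular function vanishing on the chain, and
such a function is nonnegative on all of \<open>D\<^sup>n\<close>: first on the vectors below \<open>s\<close>, by induction on
the size of their support, then everywhere by one more application of bisubmodularity with
\<open>s\<close>. Hence \<open>\<Sum>\<lambda>(a) f(a) \<ge> \<Sum>\<lambda>(a) h(a) = h(x) = f\<^sup>L(x)\<close> for every \<open>\<lambda> \<in> P(x)\<close>.\<close>

lemma obtain_rank_antimono:
  fixes u :: "'n::finite \<Rightarrow> real"
  obtains r where "bij_betw r UNIV {..<card (UNIV :: 'n set)}" "\<And>i j. u j < u i \<Longrightarrow> r i < r j"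
proof -
  obtain xs :: "'n list" where xs: "set xs = UNIV" "distinct xs"
    using finite_distinct_list[of "UNIV::'n set"] by auto
  define ys where "ys = sort_key (\<lambda>i. - u i) xs"
  have ys: "set ys = UNIV" "distinct ys" "sorted (map (\<lambda>i. - u i) ys)"
    using xs by (auto simp: ys_def)
  have len: "length ys = card (UNIV :: 'n set)"
    using ys distinct_card by fastforce
  have nth_bij: "bij_betw ((!) ys) {..<card (UNIV :: 'n set)} UNIV"
    by (rule bij_betw_nth) (use ys len in auto)
  define r where "r = inv_into {..<card (UNIV :: 'n set)} ((!) ys)"
  have r_bij: "bij_betw r UNIV {..<card (UNIV :: 'n set)}"
    unfolding r_def by (rule bij_betw_inv_into[OF nth_bij])
  have nth_r: "ys ! r i = i" for i
    unfolding r_def using nth_bij by (simp add: bij_betw_def f_inv_into_f)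
  have r_less: "r i < length ys" for i
    using r_bij len by (auto simp: bij_betw_def)
  have "r i < r j" if "u j < u i" for i j
  proof (rule ccontr)
    assume "\<not> r i < r j"
    then have "map (\<lambda>i. - u i) ys ! r j \<le> map (\<lambda>i. - u i) ys ! r i"
      using ys(3) r_less by (intro sorted_nth_mono) auto
    then show False using that nth_r r_less by simp
  qed
  with r_bij show thesis using that by blast
qed

lemma finite_DD: "finite (DD \<alpha> :: ('n::finite \<Rightarrow> real) set)"
proof -
  have "DD \<alpha> = PiE (UNIV::'n set) (\<lambda>_. Dset \<alpha>)"
    by (auto simp: DD_def PiE_def Pi_def)
  then show ?thesis by (simp add: finite_PiE Dset_def)
qed

lemma doubleton_eq_neg_alpha_one_iff:
  "0 < \<alpha> \<Longrightarrow> {x, y} = {-\<alpha>, 1::real} \<longleftrightarrow> (x = -\<alpha> \<and> y = 1) \<or> (x = 1 \<and> y = -\<alpha>)"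
  by (auto simp: doubleton_eq_iff)

lemma meet0_joinD_modular:
  assumes "0 < \<alpha>" "x \<in> Dset \<alpha>" "y \<in> Dset \<alpha>"
  shows "meet0 \<alpha> x y + \<alpha> * joinD \<alpha> 0 x y + (1 - \<alpha>) * joinD \<alpha> 1 x y = x + y"
  using assms
  by (auto simp: Dset_def meet0_def joinD_def leqD_def doubleton_eq_neg_alpha_one_iff algebra_simps)

lemma meet0_joinD_with_sign:
  assumes "0 < \<alpha>" "x \<in> Dset \<alpha>" "\<sigma> = 1 \<or> \<sigma> = -\<alpha>"
  shows "meet0 \<alpha> x \<sigma> \<in> {0, \<sigma>}" "joinD \<alpha> 0 x \<sigma> \<in> {0, \<sigma>}"
    and "joinD \<alpha> 1 x \<sigma> \<in> Dset \<alpha>" "joinD \<alpha> 1 (joinD \<alpha> 1 x \<sigma>) \<sigma> = joinD \<alpha> 1 x \<sigma>"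
  using assms by (auto simp: Dset_def meet0_def joinD_def leqD_def doubleton_eq_neg_alpha_one_iff)

lemma meet0_joinD_below_sign:
  assumes "0 < \<alpha>" "\<sigma> = 1 \<or> \<sigma> = -\<alpha>" "x \<in> {0, \<sigma>}" "y \<in> {0, \<sigma>}"
  shows "meet0 \<alpha> x y = (if x = \<sigma> \<and> y = \<sigma> then \<sigma> else 0)"
    and "joinD \<alpha> c x y = (if x = 0 \<and> y = 0 then 0 else \<sigma>)"
  using assms by (auto simp: meet0_def joinD_def leqD_def doubleton_eq_neg_alpha_one_iff)

lemma bisubmodular_minus_affine:
  fixes f :: "('n::finite \<Rightarrow> real) \<Rightarrow> real"
  assumes "0 < \<alpha>" "bisubmodular \<alpha> f"
  shows "bisubmodular \<alpha> (\<lambda>a. f a - (c + (\<Sum>i\<in>UNIV. y i * a i)))"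
  unfolding bisubmodular_def
proof (intro ballI)
  fix a b :: "'n \<Rightarrow> real" assume ab: "a \<in> DD \<alpha>" "b \<in> DD \<alpha>"
  have "(\<Sum>i\<in>UNIV. y i * meet0 \<alpha> (a i) (b i)) + \<alpha> * (\<Sum>i\<in>UNIV. y i * joinD \<alpha> 0 (a i) (b i))
        + (1 - \<alpha>) * (\<Sum>i\<in>UNIV. y i * joinD \<alpha> 1 (a i) (b i))
      = (\<Sum>i\<in>UNIV. y i * (meet0 \<alpha> (a i) (b i) + \<alpha> * joinD \<alpha> 0 (a i) (b i)
                     + (1 - \<alpha>) * joinD \<alpha> 1 (a i) (b i)))"
    by (simp add: sum_distrib_left sum.distrib sum_subtractf algebra_simps)
  also have "\<dots> = (\<Sum>i\<in>UNIV. y i * a i) + (\<Sum>i\<in>UNIV. y i * b i)"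
    using ab meet0_joinD_modular[OF assms(1)] by (simp add: DD_def sum.distrib algebra_simps)
  finally show "f (\<lambda>i. meet0 \<alpha> (a i) (b i)) - (c + (\<Sum>i\<in>UNIV. y i * meet0 \<alpha> (a i) (b i)))
      + \<alpha> * (f (\<lambda>i. joinD \<alpha> 0 (a i) (b i)) - (c + (\<Sum>i\<in>UNIV. y i * joinD \<alpha> 0 (a i) (b i))))
      + (1 - \<alpha>) * (f (\<lambda>i. joinD \<alpha> 1 (a i) (b i)) - (c + (\<Sum>i\<in>UNIV. y i * joinD \<alpha> 1 (a i) (b i))))
      \<le> f a - (c + (\<Sum>i\<in>UNIV. y i * a i)) + (f b - (c + (\<Sum>i\<in>UNIV. y i * b i)))"
    using assms(2) ab unfolding bisubmodular_def by (simp add: algebra_simps)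
qed

lemma Pdist_mean_affine:
  assumes "q \<in> Pdist \<alpha> x"
  shows "(\<Sum>a\<in>DD \<alpha>. q a * (c + (\<Sum>i\<in>UNIV. y i * a i))) = c + (\<Sum>i\<in>UNIV. y i * x i)"
proof -
  have "(\<Sum>a\<in>DD \<alpha>. q a * (c + (\<Sum>i\<in>UNIV. y i * a i)))
      = c * (\<Sum>a\<in>DD \<alpha>. q a) + (\<Sum>i\<in>UNIV. y i * (\<Sum>a\<in>DD \<alpha>. q a * a i))"
    by (simp add: algebra_simps sum.distrib sum_distrib_left sum.swap[of _ "DD \<alpha>"])
  then show ?thesis using assms by (simp add: Pdist_def)
qed

locale signed_chain =
  fixes \<alpha> :: real and s :: "'n::finite \<Rightarrow> real" and r :: "'n \<Rightarrow> nat" and N :: nat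
  assumes alpha_pos: "0 < \<alpha>" and alpha_le_1: "\<alpha> \<le> 1"
    and sign_cases: "\<And>i. s i = 1 \<or> s i = -\<alpha>"
    and rank_bij: "bij_betw r UNIV {..<N}"
begin

definition chain :: "nat \<Rightarrow> 'n \<Rightarrow> real" where
  "chain k i = (if r i < k then s i else 0)"

definition rank_inv :: "nat \<Rightarrow> 'n" where
  "rank_inv = inv_into UNIV r"

definition slope :: "(('n \<Rightarrow> real) \<Rightarrow> real) \<Rightarrow> 'n \<Rightarrow> real" where
  "slope f i = (f (chain (Suc (r i))) - f (chain (r i))) / s i"

lemma sign_nonzero: "s i \<noteq> 0"
  using sign_cases[of i] alpha_pos by auto

lemma rank_less: "r i < N"
  using rank_bij by (auto simp: bij_betw_def)

lemma inj_rank: "inj r"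
  using rank_bij by (simp add: bij_betw_def)

lemma rank_rank_inv: "k < N \<Longrightarrow> r (rank_inv k) = k"
  unfolding rank_inv_def using rank_bij by (auto simp: bij_betw_def intro: f_inv_into_f)

lemma rank_inv_rank: "rank_inv (r i) = i"
  unfolding rank_inv_def using inj_rank by simp

lemma leqV_sign_iff: "leqV \<alpha> a s \<longleftrightarrow> (\<forall>i. a i \<in> {0, s i})"
  using sign_cases by (auto simp: leqV_def leqD_def)

lemma leqV_sign_DD: "leqV \<alpha> a s \<Longrightarrow> a \<in> DD \<alpha>"
  using sign_cases by (force simp: leqV_sign_iff DD_def Dset_def)

lemma chain_leqV_sign: "leqV \<alpha> (chain k) s"
  by (simp add: leqV_sign_iff chain_def)

lemma chain_DD: "chain k \<in> DD \<alpha>"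
  using chain_leqV_sign by (rule leqV_sign_DD)

lemma chain_0: "chain 0 = (\<lambda>_. 0)"
  by (simp add: chain_def fun_eq_iff)

lemma chain_N: "chain N = s"
  using rank_less by (simp add: chain_def fun_eq_iff)

lemma chain_mono: "k \<le> k' \<Longrightarrow> leqV \<alpha> (chain k) (chain k')"
  using sign_cases by (auto simp: leqV_def leqD_def chain_def)

lemma inj_on_chain: "inj_on chain {..N}"
proof -
  have neq: "chain k \<noteq> chain k'" if "k < k'" "k' \<le> N" for k k'
  proof -
    have "r (rank_inv k) = k" using that rank_rank_inv by simp
    then have "chain k (rank_inv k) = 0" "chain k' (rank_inv k) = s (rank_inv k)"
      using that by (simp_all add: chain_def)
    then show ?thesis using sign_nonzero by metis
  qed
  show ?thesis
  proof (rule inj_onI)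
    fix k k' assume "k \<in> {..N}" "k' \<in> {..N}" "chain k = chain k'"
    then show "k = k'" using neq by (metis atMost_iff linorder_neqE_nat)
  qed
qed

lemma sum_over_chain:
  fixes p F :: "('n \<Rightarrow> real) \<Rightarrow> real"
  assumes "\<And>a. a \<notin> chain ` {..N} \<Longrightarrow> p a = 0"
  shows "(\<Sum>a\<in>DD \<alpha>. p a * F a) = (\<Sum>k\<le>N. p (chain k) * F (chain k))"
proof -
  have "(\<Sum>a\<in>DD \<alpha>. p a * F a) = (\<Sum>a\<in>chain ` {..N}. p a * F a)"
    by (rule sum.mono_neutral_right) (use finite_DD chain_DD assms in auto)
  also have "\<dots> = (\<Sum>k\<le>N. p (chain k) * F (chain k))"
    by (simp add: sum.reindex[OF inj_on_chain])
  finally show ?thesis .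
qed

lemma sum_chain_coordinate:
  "(\<Sum>k\<le>N. q k * chain k i) = s i * (\<Sum>k\<in>{Suc (r i)..N}. q k)"
proof -
  have "(\<Sum>k\<le>N. q k * chain k i) = (\<Sum>k\<in>{..N} \<inter> {k. r i < k}. q k * s i)"
    by (simp add: sum.inter_restrict chain_def if_distrib cong: if_cong)
  also have "{..N} \<inter> {k. r i < k} = {Suc (r i)..N}" by auto
  finally show ?thesis by (simp add: sum_distrib_left mult.commute)
qed

lemma chain_interpolant:
  assumes "k \<le> N"
  shows "f (chain k) = f (chain 0) + (\<Sum>i\<in>UNIV. slope f i * chain k i)"
proof -
  define D where "D j = f (chain (Suc j)) - f (chain j)" for j
  have "(\<Sum>i\<in>UNIV. slope f i * chain k i) = (\<Sum>i\<in>{i. r i < k}. D (r i))"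
    using sum.inter_restrict[of UNIV "\<lambda>i. D (r i)" "{i. r i < k}"]
    by (simp add: chain_def slope_def D_def sign_nonzero if_distrib cong: if_cong)
  also have "\<dots> = (\<Sum>j\<in>r ` {i. r i < k}. D j)"
    using inj_rank by (simp add: sum.reindex inj_on_def)
  also have "r ` {i. r i < k} = {..<k}"
  proof
    show "{..<k} \<subseteq> r ` {i. r i < k}"
    proof
      fix j assume "j \<in> {..<k}"
      then show "j \<in> r ` {i. r i < k}"
        using assms rank_rank_inv[of j] by (intro image_eqI[of _ _ "rank_inv j"]) auto
    qed
  qed auto
  also have "(\<Sum>j<k. D j) = f (chain k) - f (chain 0)"
    unfolding D_def by (rule sum_lessThan_telescope)
  finally show ?thesis by simp
qed

lemma meet_join_chain_at_top:
  assumes "leqV \<alpha> a s" "a m = s m" "\<And>i. a i \<noteq> 0 \<Longrightarrow> r i \<le> r m"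
  shows "(\<lambda>i. meet0 \<alpha> (a i) (chain (r m) i)) = a(m := 0)"
    and "(\<lambda>i. joinD \<alpha> c (a i) (chain (r m) i)) = chain (Suc (r m))"
proof -
  have below: "r i < r m" if "a i \<noteq> 0" "i \<noteq> m" for i
    using assms(3)[OF that(1)] inj_rank that(2) by (metis injD order_le_neq_trans)
  have "meet0 \<alpha> (a i) (chain (r m) i) = (a(m := 0)) i
      \<and> joinD \<alpha> c (a i) (chain (r m) i) = chain (Suc (r m)) i" for i
  proof -
    have a_i: "a i \<in> {0, s i}" and chain_i: "chain (r m) i \<in> {0, s i}"
      using assms(1) chain_leqV_sign by (auto simp: leqV_sign_iff)
    have "i \<noteq> m \<Longrightarrow> r i \<noteq> r m"
      using inj_rank by (auto dest: injD)
    then show ?thesis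
      using meet0_joinD_below_sign[OF alpha_pos sign_cases a_i chain_i] below[of i]
        sign_nonzero[of i] assms(2) a_i
      by (cases "i = m") (auto simp: chain_def)
  qed
  then show "(\<lambda>i. meet0 \<alpha> (a i) (chain (r m) i)) = a(m := 0)"
    and "(\<lambda>i. joinD \<alpha> c (a i) (chain (r m) i)) = chain (Suc (r m))"
    by auto
qed

lemma bisubmodular_nonneg_below_sign:
  assumes g: "bisubmodular \<alpha> g" and g_chain: "\<And>k. k \<le> N \<Longrightarrow> g (chain k) = 0"
    and "leqV \<alpha> a s"
  shows "0 \<le> g a"
  using assms(3)
proof (induction "card {i. a i \<noteq> 0}" arbitrary: a)
  case 0
  then have "a = chain 0" by (simp add: chain_0 fun_eq_iff)
  then show ?case using g_chain by simp
next
  case (Suc n)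
  define S where "S = {i. a i \<noteq> 0}"
  have "S \<noteq> {}" using Suc.hyps(2) unfolding S_def by (metis card.empty nat.distinct(1))
  then have "Max (r ` S) \<in> r ` S"
    by (intro Max_in) auto
  then obtain m where m: "m \<in> S" "r m = Max (r ` S)"
    by auto
  have top: "r i \<le> r m" if "a i \<noteq> 0" for i
    using that m(2) by (simp add: S_def)
  have am: "a m = s m"
    using Suc.prems m(1) by (auto simp: leqV_sign_iff S_def)
  have "{i. (a(m := 0)) i \<noteq> 0} = S - {m}"
    by (auto simp: S_def)
  then have "card {i. (a(m := 0)) i \<noteq> 0} = n"
    using Suc.hyps(2) m(1) by (simp add: S_def)
  moreover have "leqV \<alpha> (a(m := 0)) s"
    using Suc.prems by (simp add: leqV_sign_iff)
  ultimately have "0 \<le> g (a(m := 0))"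
    using Suc.hyps(1) by blast
  moreover have "g (\<lambda>i. meet0 \<alpha> (a i) (chain (r m) i))
      + \<alpha> * g (\<lambda>i. joinD \<alpha> 0 (a i) (chain (r m) i))
      + (1 - \<alpha>) * g (\<lambda>i. joinD \<alpha> 1 (a i) (chain (r m) i)) \<le> g a + g (chain (r m))"
    using g leqV_sign_DD[OF Suc.prems] chain_DD unfolding bisubmodular_def by blast
  moreover have "Suc (r m) \<le> N"
    using rank_less[of m] by simp
  ultimately show ?case
    using g_chain by (simp add: meet_join_chain_at_top[OF Suc.prems am top])
qed

lemma bisubmodular_nonneg:
  assumes g: "bisubmodular \<alpha> g" and g_chain: "\<And>k. k \<le> N \<Longrightarrow> g (chain k) = 0"
    and a: "a \<in> DD \<alpha>"
  shows "0 \<le> g a"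
proof -
  have g_s: "g s = 0"
    using g_chain[of N] chain_N by simp
  have below_s: "0 \<le> g (\<lambda>i. meet0 \<alpha> (b i) (s i))" "0 \<le> g (\<lambda>i. joinD \<alpha> 0 (b i) (s i))"
    if "b \<in> DD \<alpha>" for b
    using that meet0_joinD_with_sign(1,2)[OF alpha_pos _ sign_cases]
    by (auto simp: DD_def leqV_sign_iff intro!: bisubmodular_nonneg_below_sign[OF g g_chain])
  \<comment> \<open>\<open>z = a \<or>\<^sub>1 s\<close> is absorbed by \<open>\<or>\<^sub>1 s\<close>, so bisubmodularity on \<open>(z, s)\<close> bounds \<open>\<alpha> g z\<close> from below.\<close>
  define z where "z i = joinD \<alpha> 1 (a i) (s i)" for i
  have z: "z \<in> DD \<alpha>" "(\<lambda>i. joinD \<alpha> 1 (z i) (s i)) = z"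
    using a meet0_joinD_with_sign(3,4)[OF alpha_pos _ sign_cases] by (auto simp: z_def DD_def)
  have "g (\<lambda>i. meet0 \<alpha> (z i) (s i)) + \<alpha> * g (\<lambda>i. joinD \<alpha> 0 (z i) (s i)) + (1 - \<alpha>) * g z
      \<le> g z + g s"
    using g z chain_DD[of N] chain_N unfolding bisubmodular_def by metis
  then have "g (\<lambda>i. meet0 \<alpha> (z i) (s i)) + \<alpha> * g (\<lambda>i. joinD \<alpha> 0 (z i) (s i)) \<le> \<alpha> * g z"
    using g_s by (simp add: algebra_simps)
  then have "0 \<le> \<alpha> * g z"
    using below_s[OF z(1)] alpha_pos by (smt (verit) mult_nonneg_nonneg)
  then have "0 \<le> (1 - \<alpha>) * g z"
    using alpha_pos alpha_le_1 by (simp add: zero_le_mult_iff)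
  moreover have "g (\<lambda>i. meet0 \<alpha> (a i) (s i)) + \<alpha> * g (\<lambda>i. joinD \<alpha> 0 (a i) (s i))
      + (1 - \<alpha>) * g z \<le> g a + g s"
    using g a chain_DD[of N] chain_N unfolding bisubmodular_def z_def by metis
  ultimately show ?thesis
    using below_s[OF a] alpha_pos g_s by (smt (verit) mult_nonneg_nonneg)
qed

lemma bisubmodular_ge_chain_interpolant:
  assumes "bisubmodular \<alpha> f" "a \<in> DD \<alpha>"
  shows "f (chain 0) + (\<Sum>i\<in>UNIV. slope f i * a i) \<le> f a"
proof -
  let ?g = "\<lambda>a. f a - (f (chain 0) + (\<Sum>i\<in>UNIV. slope f i * a i))"
  have "0 \<le> ?g a"
  proof (rule bisubmodular_nonneg[where g = ?g])
    show "bisubmodular \<alpha> ?g"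
      by (rule bisubmodular_minus_affine[OF alpha_pos assms(1)])
    show "?g (chain k) = 0" if "k \<le> N" for k
      using chain_interpolant[OF that] by simp
  qed (rule assms(2))
  then show ?thesis by simp
qed

end

definition sign_vec :: "real \<Rightarrow> ('n \<Rightarrow> real) \<Rightarrow> 'n \<Rightarrow> real" where
  "sign_vec \<alpha> x i = (if 0 \<le> x i then 1 else -\<alpha>)"

definition level :: "real \<Rightarrow> ('n \<Rightarrow> real) \<Rightarrow> 'n \<Rightarrow> real" where
  "level \<alpha> x i = x i / sign_vec \<alpha> x i"

lemma sign_vec_cases: "sign_vec \<alpha> x i = 1 \<or> sign_vec \<alpha> x i = -\<alpha>"
  by (simp add: sign_vec_def)

locale lovasz_chain = signed_chain \<alpha> "sign_vec \<alpha> x" r N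
  for \<alpha> :: real and x :: "'n::finite \<Rightarrow> real" and r N +
  assumes x_bounds: "\<And>i. -\<alpha> \<le> x i \<and> x i \<le> 1"
    and rank_antimono: "\<And>i j. level \<alpha> x j < level \<alpha> x i \<Longrightarrow> r i < r j"
begin

abbreviation s :: "'n \<Rightarrow> real" where "s \<equiv> sign_vec \<alpha> x"

definition sorted_level :: "nat \<Rightarrow> real" where
  "sorted_level k = (if k = 0 then 1 else if k \<le> N then level \<alpha> x (rank_inv (k - 1)) else 0)"

definition chain_weight :: "nat \<Rightarrow> real" where
  "chain_weight k = sorted_level k - sorted_level (Suc k)"

definition chain_dist :: "('n \<Rightarrow> real) \<Rightarrow> real" where
  "chain_dist a = (\<Sum>k\<le>N. if chain k = a then chain_weight k else 0)"

lemma level_bounds: "0 \<le> level \<alpha> x i" "level \<alpha> x i \<le> 1"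
  using x_bounds[of i] alpha_pos by (auto simp: level_def sign_vec_def field_simps)

lemma sign_times_level: "x i = s i * level \<alpha> x i"
  using sign_nonzero[of i] by (simp add: level_def)

lemma sorted_level_0: "sorted_level 0 = 1"
  by (simp add: sorted_level_def)

lemma sorted_level_Suc_N: "sorted_level (Suc N) = 0"
  by (simp add: sorted_level_def)

lemma sorted_level_Suc_rank: "sorted_level (Suc (r i)) = level \<alpha> x i"
  using rank_less[of i] by (simp add: sorted_level_def rank_inv_rank)

lemma sorted_level_Suc_le: "sorted_level (Suc k) \<le> sorted_level k"
proof -
  consider "k = 0" | "0 < k" "k < N" | "N \<le> k" by linarith
  then show ?thesis
  proof cases
    case 2
    have "\<not> level \<alpha> x (rank_inv (k - 1)) < level \<alpha> x (rank_inv k)"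
      using rank_antimono[of "rank_inv (k - 1)" "rank_inv k"] rank_rank_inv 2 by fastforce
    with 2 show ?thesis by (simp add: sorted_level_def)
  qed (use level_bounds in \<open>auto simp: sorted_level_def\<close>)
qed

lemma chain_weight_nonneg: "0 \<le> chain_weight k"
  using sorted_level_Suc_le by (simp add: chain_weight_def)

lemma sum_chain_weight_from:
  "m \<le> Suc N \<Longrightarrow> (\<Sum>k\<in>{m..N}. chain_weight k) = sorted_level m"
  using sum_Suc_diff[of m N "\<lambda>k. - sorted_level k"]
  by (simp add: chain_weight_def sorted_level_Suc_N)

lemma sum_chain_weight: "(\<Sum>k\<le>N. chain_weight k) = 1"
  using sum_chain_weight_from[of 0] by (simp add: atLeast0AtMost sorted_level_0)

lemma chain_dist_chain: "k \<le> N \<Longrightarrow> chain_dist (chain k) = chain_weight k"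
  unfolding chain_dist_def using inj_on_chain
  by (simp add: inj_on_eq_iff[OF inj_on_chain] cong: if_cong)

lemma chain_dist_outside: "a \<notin> chain ` {..N} \<Longrightarrow> chain_dist a = 0"
  unfolding chain_dist_def by (rule sum.neutral) auto

lemma chain_dist_Pdist: "chain_dist \<in> Pdist \<alpha> x"
proof -
  have outside: "\<And>a. a \<notin> chain ` {..N} \<Longrightarrow> chain_dist a = 0"
    by (rule chain_dist_outside)
  have "0 \<le> chain_dist a" "chain_dist a \<le> 1" for a
  proof -
    show "0 \<le> chain_dist a"
      unfolding chain_dist_def by (rule sum_nonneg) (simp add: chain_weight_nonneg)
    have "chain_dist a \<le> (\<Sum>k\<le>N. chain_weight k)"
      unfolding chain_dist_def by (rule sum_mono) (simp add: chain_weight_nonneg)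
    then show "chain_dist a \<le> 1" by (simp add: sum_chain_weight)
  qed
  moreover have "a \<notin> DD \<alpha> \<Longrightarrow> chain_dist a = 0" for a
    using outside chain_DD by (metis imageE)
  moreover have "(\<Sum>a\<in>DD \<alpha>. chain_dist a) = 1"
    using sum_over_chain[where p = chain_dist and F = "\<lambda>_. 1", OF outside] by (simp add: chain_dist_chain sum_chain_weight)
  moreover have "(\<Sum>a\<in>DD \<alpha>. chain_dist a * a i) = x i" for i
  proof -
    have "(\<Sum>a\<in>DD \<alpha>. chain_dist a * a i) = (\<Sum>k\<le>N. chain_weight k * chain k i)"
      using sum_over_chain[where p = chain_dist and F = "\<lambda>a. a i", OF outside] by (simp add: chain_dist_chain)
    also have "\<dots> = x i"
      using rank_less[of i] by (simp add: sum_chain_coordinate sum_chain_weight_from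
          sorted_level_Suc_rank sign_times_level)
    finally show ?thesis .
  qed
  ultimately show ?thesis by (simp add: Pdist_def)
qed

lemma chain_support_chain_dist: "chain_support \<alpha> chain_dist"
  unfolding chain_support_def
proof (intro ballI impI)
  fix a b assume "chain_dist a \<noteq> 0" "chain_dist b \<noteq> 0"
  then obtain k k' where "a = chain k" "b = chain k'"
    using chain_dist_outside by blast
  then show "leqV \<alpha> a b \<or> leqV \<alpha> b a"
    using chain_mono nat_le_linear by metis
qed

context
  fixes p :: "('n \<Rightarrow> real) \<Rightarrow> real"
  assumes p_Pdist: "p \<in> Pdist \<alpha> x" and p_chain: "chain_support \<alpha> p"
begin

lemma support_coordinate:
  assumes "a \<in> DD \<alpha>" "p a \<noteq> 0" "a i \<noteq> 0" "b \<in> DD \<alpha>" "p b \<noteq> 0"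
  shows "b i \<in> {0, a i}"
proof -
  have "leqV \<alpha> a b \<or> leqV \<alpha> b a"
    using p_chain assms unfolding chain_support_def by blast
  then have "leqD \<alpha> (a i) (b i) \<or> leqD \<alpha> (b i) (a i)"
    by (auto simp: leqV_def)
  then show ?thesis
    using assms(3) by (auto simp: leqD_def)
qed

lemma mean_eq_mass:
  assumes "\<And>b. b \<in> DD \<alpha> \<Longrightarrow> p b \<noteq> 0 \<Longrightarrow> b i \<in> {0, \<sigma>}"
  shows "x i = \<sigma> * (\<Sum>b\<in>DD \<alpha>. p b * of_bool (b i \<noteq> 0))"
proof -
  have "(\<Sum>b\<in>DD \<alpha>. p b * b i) = (\<Sum>b\<in>DD \<alpha>. \<sigma> * (p b * of_bool (b i \<noteq> 0)))"
    by (rule sum.cong) (use assms in auto)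
  then show ?thesis
    using p_Pdist by (simp add: Pdist_def sum_distrib_left)
qed

lemma mass_pos:
  assumes "a \<in> DD \<alpha>" "p a \<noteq> 0" "a i \<noteq> 0"
  shows "0 < (\<Sum>b\<in>DD \<alpha>. p b * of_bool (b i \<noteq> 0))"
proof (rule sum_pos2[OF finite_DD assms(1)])
  show "0 < p a * of_bool (a i \<noteq> 0)"
    using assms(2,3) p_Pdist by (simp add: Pdist_def order_le_neq_trans)
qed (use p_Pdist in \<open>simp add: Pdist_def\<close>)

lemma support_leqV_sign:
  assumes "a \<in> DD \<alpha>" "p a \<noteq> 0"
  shows "a i \<in> {0, s i}"
proof (cases "a i = 0")
  case False
  define M where "M = (\<Sum>b\<in>DD \<alpha>. p b * of_bool (b i \<noteq> 0))"
  have x_i: "x i = a i * M"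
    unfolding M_def using support_coordinate[OF assms False] by (rule mean_eq_mass)
  have "0 < M"
    unfolding M_def using assms False by (rule mass_pos)
  then have "0 < \<alpha> * M"
    using alpha_pos by simp
  moreover have "a i = 1 \<or> a i = -\<alpha>"
    using assms(1) False by (auto simp: DD_def Dset_def)
  ultimately show ?thesis
    using x_i \<open>0 < M\<close> by (auto simp: sign_vec_def)
qed simp

lemma level_eq_mass: "level \<alpha> x i = (\<Sum>b\<in>DD \<alpha>. p b * of_bool (b i \<noteq> 0))"
proof -
  have "x i = s i * (\<Sum>b\<in>DD \<alpha>. p b * of_bool (b i \<noteq> 0))"
    using support_leqV_sign by (rule mean_eq_mass)
  then show ?thesis
    using sign_times_level[of i] sign_nonzero[of i] by simp
qed

lemma support_rank_less:
  assumes a: "a \<in> DD \<alpha>" "p a \<noteq> 0" and "a i \<noteq> 0" "a j = 0"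
  shows "r i < r j"
proof -
  have "(\<Sum>b\<in>DD \<alpha>. p b * of_bool (b j \<noteq> 0)) < (\<Sum>b\<in>DD \<alpha>. p b * of_bool (b i \<noteq> 0))"
  proof (rule sum_strict_mono_ex1[OF finite_DD])
    show "\<forall>b\<in>DD \<alpha>. p b * of_bool (b j \<noteq> 0) \<le> p b * of_bool (b i \<noteq> 0)"
    proof
      fix b :: "'n \<Rightarrow> real" assume b: "b \<in> DD \<alpha>"
      show "p b * of_bool (b j \<noteq> 0) \<le> p b * of_bool (b i \<noteq> 0)"
      proof (cases "p b = 0")
        case False
        have "leqV \<alpha> a b \<or> leqV \<alpha> b a"
          using p_chain a b False unfolding chain_support_def by blast
        then have "leqD \<alpha> (a i) (b i) \<or> leqD \<alpha> (b j) (a j)"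
          by (auto simp: leqV_def)
        then have "b i \<noteq> 0 \<or> b j = 0"
          using assms(3,4) alpha_pos by (auto simp: leqD_def)
        then show ?thesis
          using p_Pdist by (auto simp: Pdist_def)
      qed simp
    qed
    show "\<exists>b\<in>DD \<alpha>. p b * of_bool (b j \<noteq> 0) < p b * of_bool (b i \<noteq> 0)"
      using a assms(3,4) p_Pdist by (auto simp: Pdist_def order_le_neq_trans intro!: bexI[of _ a])
  qed
  then show ?thesis
    using rank_antimono by (simp add: level_eq_mass)
qed

lemma support_subset_chain:
  assumes "a \<in> DD \<alpha>" "p a \<noteq> 0"
  shows "a \<in> chain ` {..N}"
proof -
  define k where "k = Min (insert N (r ` {j. a j = 0}))"
  have "r i < k \<longleftrightarrow> a i \<noteq> 0" for i
    using support_rank_less[OF assms, of i] rank_less[of i] by (auto simp: k_def)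
  then have "a = chain k"
    using support_leqV_sign[OF assms] by (auto simp: chain_def fun_eq_iff)
  moreover have "k \<le> N"
    by (simp add: k_def)
  ultimately show ?thesis by auto
qed

lemma chain_prob_eq_weight:
  assumes "k \<le> N"
  shows "p (chain k) = chain_weight k"
proof -
  have outside: "\<And>a. a \<notin> chain ` {..N} \<Longrightarrow> p a = 0"
    using support_subset_chain p_Pdist by (auto simp: Pdist_def)
  define T where "T m = (\<Sum>k\<in>{m..N}. p (chain k))" for m
  have "T m = sorted_level m" if "m \<le> Suc N" for m
  proof -
    have "m = 0 \<or> m = Suc N \<or> m = Suc (r (rank_inv (m - 1)))"
      using that rank_rank_inv[of "m - 1"] by (cases "m = 0 \<or> m = Suc N") auto
    then consider "m = 0" | "m = Suc N" | i where "m = Suc (r i)"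
      by blast
    then show ?thesis
    proof cases
      case 1
      then show ?thesis
        using sum_over_chain[where p = p and F = "\<lambda>_. 1", OF outside] p_Pdist
        by (simp add: T_def atLeast0AtMost sorted_level_0 Pdist_def)
    next
      case 2
      then show ?thesis by (simp add: T_def sorted_level_Suc_N)
    next
      case 3
      have "x i = (\<Sum>k\<le>N. p (chain k) * chain k i)"
        using sum_over_chain[where p = p and F = "\<lambda>a. a i", OF outside] p_Pdist by (simp add: Pdist_def)
      also have "\<dots> = s i * T m"
        by (simp add: sum_chain_coordinate T_def 3)
      finally show ?thesis
        using sign_times_level[of i] sign_nonzero[of i] sorted_level_Suc_rank[of i] 3 by simp
    qed
  qed
  moreover have "T k = p (chain k) + T (Suc k)"
    unfolding T_def using assms by (simp add: sum.atLeast_Suc_atMost)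
  ultimately show ?thesis
    using assms by (simp add: chain_weight_def)
qed

lemma eq_chain_dist: "p = chain_dist"
proof
  fix a
  show "p a = chain_dist a"
  proof (cases "a \<in> chain ` {..N}")
    case True
    then show ?thesis
      using chain_prob_eq_weight chain_dist_chain by auto
  next
    case False
    then show ?thesis
      using support_subset_chain p_Pdist chain_dist_outside
      by (cases "a \<in> DD \<alpha>") (auto simp: Pdist_def)
  qed
qed

end

lemma lambda_chain_eq_chain_dist: "lambda_chain \<alpha> x = chain_dist"
  unfolding lambda_chain_def
proof (rule the_equality)
  show "chain_dist \<in> Pdist \<alpha> x \<and> chain_support \<alpha> chain_dist"
    using chain_dist_Pdist chain_support_chain_dist by blast
  show "p = chain_dist" if "p \<in> Pdist \<alpha> x \<and> chain_support \<alpha> p" for p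
    using that eq_chain_dist by blast
qed

lemma lovasz_ext_eq_interpolant:
  "lovasz_ext \<alpha> f x = f (chain 0) + (\<Sum>i\<in>UNIV. slope f i * x i)"
proof -
  have "lovasz_ext \<alpha> f x
      = (\<Sum>a\<in>DD \<alpha>. chain_dist a * (f (chain 0) + (\<Sum>i\<in>UNIV. slope f i * a i)))"
    unfolding lovasz_ext_def lambda_chain_eq_chain_dist
  proof (rule sum.cong)
    fix a :: "'n \<Rightarrow> real"
    show "chain_dist a * f a = chain_dist a * (f (chain 0) + (\<Sum>i\<in>UNIV. slope f i * a i))"
    proof (cases "a \<in> chain ` {..N}")
      case True
      then obtain k where "k \<le> N" "a = chain k" by auto
      then show ?thesis using chain_interpolant[of k f] by simp
    qed (simp add: chain_dist_outside)
  qed simp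
  also have "\<dots> = f (chain 0) + (\<Sum>i\<in>UNIV. slope f i * x i)"
    by (rule Pdist_mean_affine[OF chain_dist_Pdist])
  finally show ?thesis .
qed

lemma interpolant_le_Pdist:
  assumes "bisubmodular \<alpha> f" "q \<in> Pdist \<alpha> x"
  shows "f (chain 0) + (\<Sum>i\<in>UNIV. slope f i * x i) \<le> (\<Sum>a\<in>DD \<alpha>. q a * f a)"
proof -
  have "(\<Sum>a\<in>DD \<alpha>. q a * (f (chain 0) + (\<Sum>i\<in>UNIV. slope f i * a i)))
      \<le> (\<Sum>a\<in>DD \<alpha>. q a * f a)"
    using assms bisubmodular_ge_chain_interpolant
    by (intro sum_mono mult_left_mono) (auto simp: Pdist_def)
  then show ?thesis
    using Pdist_mean_affine[OF assms(2)] by simp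
qed

end

theorem mainTheorem5:
  fixes \<alpha> :: real and f :: "('n::finite \<Rightarrow> real) \<Rightarrow> real" and x :: "'n \<Rightarrow> real"
  assumes "0 < \<alpha>" and "\<alpha> \<le> 1"
    and "bisubmodular \<alpha> f"
    and "\<forall>i. -\<alpha> \<le> x i \<and> x i \<le> 1"
  shows "lovasz_ext \<alpha> f x = convex_closure \<alpha> f x"
proof -
  obtain r where "bij_betw r UNIV {..<card (UNIV :: 'n set)}"
    and "\<And>i j. level \<alpha> x j < level \<alpha> x i \<Longrightarrow> r i < r j"
    using obtain_rank_antimono[of "level \<alpha> x"] by blast
  then interpret lovasz_chain \<alpha> x r "card (UNIV :: 'n set)"
    using assms by unfold_locales (auto simp: sign_vec_cases)
  have "convex_closure \<alpha> f x = Inf {(\<Sum>a\<in>DD \<alpha>. p a * f a) | p. p \<in> Pdist \<alpha> x}"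
    by (simp add: convex_closure_def)
  also have "\<dots> = lovasz_ext \<alpha> f x"
  proof (rule cInf_eq_minimum)
    show "lovasz_ext \<alpha> f x \<in> {(\<Sum>a\<in>DD \<alpha>. p a * f a) | p. p \<in> Pdist \<alpha> x}"
      using chain_dist_Pdist by (auto simp: lovasz_ext_def lambda_chain_eq_chain_dist)
    show "lovasz_ext \<alpha> f x \<le> v" if "v \<in> {(\<Sum>a\<in>DD \<alpha>. p a * f a) | p. p \<in> Pdist \<alpha> x}" for v
      using that interpolant_le_Pdist[OF assms(3)] by (auto simp: lovasz_ext_eq_interpolant)
  qed
  finally show ?thesis ..
qed

end
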